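(* Let $b:(0,\infty)\to(0,\infty)$ be a slowly varying function. Then there is a function $c:(0,\infty)\to(0,\infty)$ which satisfies $c\approx b$ on $(0,\infty)$, is also slowly varying, and has continuous classical derivatives of all orders (i.e. $c\in\mathcal{C}^\infty((0,\infty))$).
   Context: A measurable function $b:(0,\infty)\to(0,\infty)$ is called slowly varying (s.v.) if for every $\varepsilon>0$ there exist a non-decreasing function $b_\varepsilon$ and a non-increasing function $b_{-\varepsilon}$ on $(0,\infty)$ such that $t^{\varepsilon}b(t)\approx b_\varepsilon(t)$ and $t^{-\varepsilon}b(t)\approx b_{-\varepsilon}(t)$ on $(0,\infty)$. Here $f\approx g$ on a set $A$ means that there is a constant $C\ge 1$ (independent of the argument) such that $C^{-1}g(t)\le f(t)\le C g(t)$ for all $t\in A$. Measurability is with respect to Lebesgue measure. *)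

theory Defs
  imports "HOL-Analysis.Analysis"
begin

definition equiv_on :: "real set \<Rightarrow> (real \<Rightarrow> real) \<Rightarrow> (real \<Rightarrow> real) \<Rightarrow> bool" where
  "equiv_on A f g \<longleftrightarrow> (\<exists>C\<ge>1. \<forall>t\<in>A. g t / C \<le> f t \<and> f t \<le> C * g t)"

definition slowly_varying :: "(real \<Rightarrow> real) \<Rightarrow> bool" where
  "slowly_varying b \<longleftrightarrow>
     b \<in> borel_measurable (lebesgue_on {0<..}) \<and>
     (\<forall>t>0. b t > 0) \<and>
     (\<forall>\<epsilon>>0. \<exists>bp bm :: real \<Rightarrow> real.
        mono_on {0<..} bp \<and> antimono_on {0<..} bm \<and>
        equiv_on {0<..} (\<lambda>t. t powr \<epsilon> * b t) bp \<and>
        equiv_on {0<..} (\<lambda>t. t powr (-\<epsilon>) * b t) bm)"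

definition smooth_on :: "real set \<Rightarrow> (real \<Rightarrow> real) \<Rightarrow> bool" where
  "smooth_on S c \<longleftrightarrow>
     (\<forall>k. (\<forall>t\<in>S. ((deriv ^^ k) c) differentiable (at t)) \<and> continuous_on S ((deriv ^^ k) c))"

end

theory Submission
  imports Defs "HOL-Computational_Algebra.Polynomial"
begin

(* Fix a smooth bump \<psi> supported in (1/2, 2) and put c t = \<Sum>n\<in>\<int>. b (2^n) * \<psi> (t / 2^n).
   Near each t > 0 only finitely many terms are nonzero, so c is smooth. Slow variation with
   \<epsilon> = 1 makes b s and b t uniformly comparable for t \<le> s \<le> 2t, and \<psi> s + \<psi> (s/2) is bounded
   below on [1, 2], whence c \<approx> b. Finally, a positive measurable function equivalent to a slowly
   varying one is slowly varying, since multiplying by t powr \<epsilon> preserves equivalence. *)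

lemma equiv_on_trans:
  assumes "equiv_on A f g" "equiv_on A g h"
  shows "equiv_on A f h"
proof -
  obtain C where C: "C \<ge> 1" "\<And>t. t \<in> A \<Longrightarrow> g t / C \<le> f t \<and> f t \<le> C * g t"
    using assms(1) unfolding equiv_on_def by blast
  obtain D where D: "D \<ge> 1" "\<And>t. t \<in> A \<Longrightarrow> h t / D \<le> g t \<and> g t \<le> D * h t"
    using assms(2) unfolding equiv_on_def by blast
  show ?thesis
    unfolding equiv_on_def
  proof (intro exI[of _ "C * D"] conjI ballI)
    show "1 \<le> C * D"
      using C(1) D(1) by (metis mult_mono' mult_1 zero_le_one)
    fix t assume "t \<in> A"
    with C D have "h t \<le> D * g t" "g t \<le> C * f t" "f t \<le> C * g t" "g t \<le> D * h t"
      by (auto simp: divide_le_eq mult.commute)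
    with C(1) D(1) have "h t \<le> C * D * f t" "f t \<le> C * D * h t"
      by (smt (verit) mult.assoc mult.left_commute mult_left_mono)+
    then show "h t / (C * D) \<le> f t" "f t \<le> C * D * h t"
      using C(1) D(1) by (simp_all add: divide_le_eq mult.commute)
  qed
qed

lemma equiv_on_mult_left:
  assumes "equiv_on A f g" "\<And>t. t \<in> A \<Longrightarrow> w t \<ge> 0"
  shows "equiv_on A (\<lambda>t. w t * f t) (\<lambda>t. w t * g t)"
proof -
  obtain C where C: "C \<ge> 1" "\<And>t. t \<in> A \<Longrightarrow> g t / C \<le> f t \<and> f t \<le> C * g t"
    using assms(1) unfolding equiv_on_def by blast
  have "w t * g t / C \<le> w t * f t \<and> w t * f t \<le> C * (w t * g t)" if "t \<in> A" for t
    using C(2)[OF that] mult_left_mono[OF _ assms(2)[OF that]]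
    by (metis mult.left_commute times_divide_eq_right)
  with C(1) show ?thesis
    unfolding equiv_on_def by blast
qed

lemma equiv_on_pos:
  assumes "equiv_on A f g" "t \<in> A" "g t > 0"
  shows "f t > 0"
  using assms unfolding equiv_on_def
  by (smt (verit, best) divide_pos_pos)

lemma equiv_on_le_transfer:
  assumes "equiv_on A f g"
  obtains C where "C \<ge> 1" "\<And>s t. s \<in> A \<Longrightarrow> t \<in> A \<Longrightarrow> g s \<le> g t \<Longrightarrow> f s \<le> C * f t"
proof -
  obtain C where C: "C \<ge> 1" "\<And>t. t \<in> A \<Longrightarrow> g t / C \<le> f t \<and> f t \<le> C * g t"
    using assms unfolding equiv_on_def by blast
  have "f s \<le> (C * C) * f t" if "s \<in> A" "t \<in> A" "g s \<le> g t" for s t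
  proof -
    have "f s \<le> C * g t"
      using C that by (smt (verit) mult_left_mono)
    also have "\<dots> \<le> C * (C * f t)"
      using C that by (intro mult_left_mono) (auto simp: divide_le_eq mult.commute)
    finally show ?thesis by simp
  qed
  moreover have "C * C \<ge> 1"
    using C(1) by (metis mult_mono' mult_1 zero_le_one)
  ultimately show ?thesis using that by blast
qed

lemma slowly_varying_equiv:
  assumes b: "slowly_varying b" and cb: "equiv_on {0<..} c b"
    and meas: "c \<in> borel_measurable (lebesgue_on {0<..})"
  shows "slowly_varying c"
  unfolding slowly_varying_def
proof (intro conjI allI impI)
  show "c \<in> borel_measurable (lebesgue_on {0<..})" by (fact meas)
  show "c t > 0" if "t > 0" for t
    using b equiv_on_pos[OF cb] that by (simp add: slowly_varying_def)
  fix \<epsilon> :: real assume "\<epsilon> > 0"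
  with b obtain bp bm where bp: "mono_on {0<..} bp" "equiv_on {0<..} (\<lambda>t. t powr \<epsilon> * b t) bp"
    and bm: "antimono_on {0<..} bm" "equiv_on {0<..} (\<lambda>t. t powr (-\<epsilon>) * b t) bm"
    unfolding slowly_varying_def by blast
  have "equiv_on {0<..} (\<lambda>t. t powr e * c t) (\<lambda>t. t powr e * b t)" for e
    by (rule equiv_on_mult_left[OF cb]) simp
  with bp bm show "\<exists>bp bm. mono_on {0<..} bp \<and> antimono_on {0<..} bm \<and>
      equiv_on {0<..} (\<lambda>t. t powr \<epsilon> * c t) bp \<and> equiv_on {0<..} (\<lambda>t. t powr (-\<epsilon>) * c t) bm"
    by (blast intro: equiv_on_trans)
qed

lemma slowly_varying_doubling:
  assumes b: "slowly_varying b"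
  obtains K where "K \<ge> 1"
    "\<And>t s. 0 < t \<Longrightarrow> t \<le> s \<Longrightarrow> s \<le> 2 * t \<Longrightarrow> b s \<le> K * b t \<and> b t \<le> K * b s"
proof -
  from b obtain bp bm where bp: "mono_on {0<..} bp" "equiv_on {0<..} (\<lambda>t. t powr 1 * b t) bp"
    and bm: "antimono_on {0<..} bm" "equiv_on {0<..} (\<lambda>t. t powr (-1) * b t) bm"
    unfolding slowly_varying_def by (meson zero_less_one)
  obtain C where C: "C \<ge> 1"
    "\<And>s t. s \<in> {0<..} \<Longrightarrow> t \<in> {0<..} \<Longrightarrow> bp s \<le> bp t \<Longrightarrow> s powr 1 * b s \<le> C * (t powr 1 * b t)"
    using equiv_on_le_transfer[OF bp(2)] by blast
  obtain D where D: "D \<ge> 1"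
    "\<And>s t. s \<in> {0<..} \<Longrightarrow> t \<in> {0<..} \<Longrightarrow> bm s \<le> bm t \<Longrightarrow> s powr -1 * b s \<le> D * (t powr -1 * b t)"
    using equiv_on_le_transfer[OF bm(2)] by blast
  have pos: "b t > 0" if "t > 0" for t
    using b that by (simp add: slowly_varying_def)
  show ?thesis
  proof (rule that[of "2 * C * D"])
    show "1 \<le> 2 * C * D"
      using mult_mono[OF C(1) D(1)] C(1) by simp
    fix t s :: real assume ts: "0 < t" "t \<le> s" "s \<le> 2 * t"
    have "bp t \<le> bp s" "bm s \<le> bm t"
      using bp(1) bm(1) ts by (auto simp: monotone_on_def)
    then have incr: "t * b t \<le> C * (s * b s)" and decr: "b s / s \<le> D * (b t / t)"
      using C(2)[of t s] D(2)[of s t] ts by (auto simp: powr_minus divide_inverse mult.commute)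
    have "b t > 0" "b s > 0"
      using pos ts by auto
    have "s * b s \<le> 2 * t * b s"
      using ts \<open>b s > 0\<close> by (intro mult_right_mono) auto
    then have "t * b t \<le> C * (2 * t * b s)"
      using incr C(1) by (meson order_trans mult_left_mono zero_le_one)
    then have bt_le: "b t \<le> 2 * C * b s"
      using ts by (simp add: mult_ac)
    have "b s \<le> s * (D * (b t / t))"
      using decr ts by (simp add: divide_le_eq mult.commute)
    also have "\<dots> \<le> 2 * t * (D * (b t / t))"
      using ts D(1) \<open>b t > 0\<close> by (intro mult_right_mono) auto
    finally have "b s \<le> 2 * D * b t"
      using ts by simp
    moreover have "2 * C * b s \<le> 2 * C * D * b s" "2 * D * b t \<le> 2 * C * D * b t"
      using C(1) D(1) \<open>b t > 0\<close> \<open>b s > 0\<close> by auto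
    ultimately show "b s \<le> 2 * C * D * b t \<and> b t \<le> 2 * C * D * b s"
      using bt_le by linarith
  qed
qed

lemma smooth_onI:
  assumes "\<And>k t. t \<in> S \<Longrightarrow> (deriv ^^ k) f differentiable (at t)"
  shows "smooth_on S f"
  unfolding smooth_on_def
  using assms by (blast intro: continuous_at_imp_continuous_on differentiable_imp_continuous_within)

lemma smooth_on_cong_locally:
  assumes "\<And>t. t \<in> S \<Longrightarrow> \<exists>g. smooth_on UNIV g \<and> eventually (\<lambda>x. f x = g x) (nhds t)"
  shows "smooth_on S f"
proof (rule smooth_onI)
  fix k t assume "t \<in> S"
  then obtain g where g: "smooth_on UNIV g" and fg: "eventually (\<lambda>x. f x = g x) (nhds t)"
    using assms by blast
  have "eventually (\<lambda>y. eventually (\<lambda>x. f x = g x) (nhds y)) (nhds t)"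
    using fg by (simp add: eventually_eventually)
  then have "eventually (\<lambda>y. (deriv ^^ k) f y = (deriv ^^ k) g y) (nhds t)"
    by eventually_elim (rule higher_deriv_cong_ev, simp_all)
  moreover have "(deriv ^^ k) g differentiable (at t)"
    using g unfolding smooth_on_def by blast
  ultimately show "(deriv ^^ k) f differentiable (at t)"
    unfolding real_differentiable_def by (metis DERIV_cong_ev)
qed

fun differentiable_upto :: "nat \<Rightarrow> (real \<Rightarrow> real) \<Rightarrow> bool" where
  "differentiable_upto 0 f \<longleftrightarrow> (\<forall>x. f differentiable (at x))"
| "differentiable_upto (Suc k) f \<longleftrightarrow> (\<forall>x. f differentiable (at x)) \<and> differentiable_upto k (deriv f)"

lemma differentiable_upto_Suc_imp: "differentiable_upto (Suc k) f \<Longrightarrow> differentiable_upto k f"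
  by (induction k arbitrary: f) auto

lemma differentiable_upto_higher_deriv:
  "differentiable_upto k f \<Longrightarrow> (deriv ^^ k) f differentiable (at x)"
  by (induction k arbitrary: f) (auto simp: funpow_Suc_right simp del: funpow.simps)

lemma smooth_on_UNIV_if_differentiable_upto:
  "(\<And>k. differentiable_upto k f) \<Longrightarrow> smooth_on UNIV f"
  by (blast intro: smooth_onI differentiable_upto_higher_deriv)

lemma differentiable_upto_if_deriv_closed:
  assumes "\<And>g. g \<in> F \<Longrightarrow> (\<forall>x. g differentiable (at x)) \<and> deriv g \<in> F" "f \<in> F"
  shows "differentiable_upto k f"
  using assms(2) by (induction k arbitrary: f) (auto dest: assms(1))

lemma differentiable_upto_const: "differentiable_upto k (\<lambda>x. c)"
  by (induction k arbitrary: c) auto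

lemma deriv_add_real:
  fixes x :: real
  assumes "f differentiable (at x)" "g differentiable (at x)"
  shows "deriv (\<lambda>x. f x + g x) x = deriv f x + deriv g x"
  using assms[folded DERIV_deriv_iff_real_differentiable] by (intro DERIV_imp_deriv DERIV_add)

lemma deriv_mult_real:
  fixes x :: real
  assumes "f differentiable (at x)" "g differentiable (at x)"
  shows "deriv (\<lambda>x. f x * g x) x = deriv f x * g x + f x * deriv g x"
  using DERIV_mult[OF assms[folded DERIV_deriv_iff_real_differentiable]]
  by (intro DERIV_imp_deriv) (simp add: mult.commute)

lemma differentiable_upto_add:
  "differentiable_upto k f \<Longrightarrow> differentiable_upto k g \<Longrightarrow> differentiable_upto k (\<lambda>x. f x + g x)"
proof (induction k arbitrary: f g)
  case (Suc k)
  then have "deriv (\<lambda>x. f x + g x) = (\<lambda>x. deriv f x + deriv g x)"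
    by (intro ext deriv_add_real) auto
  with Suc show ?case by simp
qed simp

lemma differentiable_upto_mult:
  "differentiable_upto k f \<Longrightarrow> differentiable_upto k g \<Longrightarrow> differentiable_upto k (\<lambda>x. f x * g x)"
proof (induction k arbitrary: f g)
  case (Suc k)
  then have "deriv (\<lambda>x. f x * g x) = (\<lambda>x. deriv f x * g x + f x * deriv g x)"
    by (intro ext deriv_mult_real) auto
  moreover have "differentiable_upto k (\<lambda>x. deriv f x * g x + f x * deriv g x)"
    using Suc differentiable_upto_Suc_imp by (intro differentiable_upto_add Suc.IH) auto
  ultimately show ?case using Suc.prems by simp
qed simp

lemma differentiable_upto_sum:
  "finite F \<Longrightarrow> (\<And>i. i \<in> F \<Longrightarrow> differentiable_upto k (f i)) \<Longrightarrow>
    differentiable_upto k (\<lambda>x. \<Sum>i\<in>F. f i x)"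
  by (induction F rule: finite_induct) (simp_all add: differentiable_upto_const differentiable_upto_add)

lemma has_real_derivative_compose_affine:
  assumes "f differentiable (at (a * x + d))"
  shows "((\<lambda>x. f (a * x + d)) has_real_derivative a * deriv f (a * x + d)) (at x)"
proof -
  have "((\<lambda>x. a * x + d) has_real_derivative a) (at x)"
    by (auto intro!: derivative_eq_intros)
  from DERIV_chain2[OF assms[folded DERIV_deriv_iff_real_differentiable] this] show ?thesis
    by (simp add: mult.commute)
qed

lemma differentiable_upto_compose_affine:
  "differentiable_upto k f \<Longrightarrow> differentiable_upto k (\<lambda>x. f (a * x + d))"
proof (induction k arbitrary: f)
  case 0
  then show ?case
    using has_real_derivative_compose_affine by (fastforce simp: real_differentiable_def)
next
  case (Suc k)
  then have "\<And>x. ((\<lambda>x. f (a * x + d)) has_real_derivative a * deriv f (a * x + d)) (at x)"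
    by (intro has_real_derivative_compose_affine) auto
  then have "(\<forall>x. (\<lambda>x. f (a * x + d)) differentiable (at x))"
    and "deriv (\<lambda>x. f (a * x + d)) = (\<lambda>x. a * deriv f (a * x + d))"
    by (auto simp: real_differentiable_def intro!: ext DERIV_imp_deriv)
  moreover have "differentiable_upto k (\<lambda>x. a * deriv f (a * x + d))"
    using Suc by (intro differentiable_upto_mult differentiable_upto_const Suc.IH) auto
  ultimately show ?case by simp
qed

(* Closed under deriv (has_real_derivative_exp_neg_inv_poly), this family contains all
   derivatives of the flat function exp_neg_inv_poly 1, i.e. exp (-1/x) extended by 0. *)
definition exp_neg_inv_poly :: "real poly \<Rightarrow> real \<Rightarrow> real" where
  "exp_neg_inv_poly p x = (if x > 0 then poly p (1 / x) * exp (- (1 / x)) else 0)"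

lemma tendsto_poly_times_exp_neg_at_top:
  "((\<lambda>y. poly p y * exp (- y)) \<longlongrightarrow> (0 :: real)) at_top"
proof -
  have "((\<lambda>y. \<Sum>i\<le>degree p. coeff p i * (y ^ i / exp y)) \<longlongrightarrow> (\<Sum>i\<le>degree p. coeff p i * 0)) at_top"
    by (intro tendsto_sum tendsto_mult tendsto_const tendsto_power_div_exp_0)
  then show ?thesis
    by (simp add: poly_altdef exp_minus sum_distrib_right divide_inverse mult.assoc)
qed

lemma tendsto_exp_neg_inv_poly_at_right_0:
  "((\<lambda>y. poly p (1 / y) * exp (- (1 / y))) \<longlongrightarrow> (0 :: real)) (at_right 0)"
  using filterlim_compose[OF tendsto_poly_times_exp_neg_at_top filterlim_inverse_at_top_right]
  by (simp add: o_def inverse_eq_divide)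

lemma has_real_derivative_exp_neg_inv_poly_0:
  "(exp_neg_inv_poly p has_real_derivative 0) (at 0)"
proof -
  \<comment> \<open>For y > 0 the difference quotient is q (1/y) * exp (-1/y) with q z = z * p z.\<close>
  have "((\<lambda>y. poly (pCons 0 p) (1 / y) * exp (- (1 / y))) \<longlongrightarrow> 0) (at_right 0)"
    by (rule tendsto_exp_neg_inv_poly_at_right_0)
  then have "((\<lambda>y. exp_neg_inv_poly p y / y) \<longlongrightarrow> 0) (at_right 0)"
    by (rule Lim_transform_eventually)
      (auto simp: eventually_at_right_field exp_neg_inv_poly_def intro: exI[of _ 1])
  moreover have "((\<lambda>y. exp_neg_inv_poly p y / y) \<longlongrightarrow> 0) (at_left 0)"
    by (rule tendsto_eventually)
      (auto simp: eventually_at_left_field exp_neg_inv_poly_def intro: exI[of _ "-1"])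
  ultimately show ?thesis
    by (simp add: DERIV_def exp_neg_inv_poly_def filterlim_split_at)
qed

lemma has_real_derivative_exp_neg_inv_poly:
  "(exp_neg_inv_poly p has_real_derivative exp_neg_inv_poly ([:0, 0, 1:] * (p - pderiv p)) x) (at x)"
proof (cases x "0 :: real" rule: linorder_cases)
  case less
  have "((\<lambda>y. 0) has_real_derivative 0) (at x)"
    by simp
  then have "(exp_neg_inv_poly p has_real_derivative 0) (at x)"
    by (rule has_field_derivative_transform_within_open[of _ _ _ "{..<0}"])
      (use less in \<open>auto simp: exp_neg_inv_poly_def\<close>)
  with less show ?thesis
    by (simp add: exp_neg_inv_poly_def)
next
  case equal
  then show ?thesis
    using has_real_derivative_exp_neg_inv_poly_0 by (simp add: exp_neg_inv_poly_def)
next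
  case greater
  have "((\<lambda>y. poly p (1 / y) * exp (- (1 / y))) has_real_derivative
      poly (pderiv p) (1 / x) * (- (1 / x\<^sup>2)) * exp (- (1 / x)) + poly p (1 / x) * (exp (- (1 / x)) * (1 / x\<^sup>2))) (at x)"
    using greater
    by (auto intro!: derivative_eq_intros DERIV_chain2[OF poly_DERIV] simp: power2_eq_square field_simps)
  then have "((\<lambda>y. poly p (1 / y) * exp (- (1 / y))) has_real_derivative
      exp_neg_inv_poly ([:0, 0, 1:] * (p - pderiv p)) x) (at x)"
    using greater by (simp add: exp_neg_inv_poly_def field_simps power2_eq_square)
  then show ?thesis
    by (rule has_field_derivative_transform_within_open[of _ _ _ "{0<..}"])
      (use greater in \<open>auto simp: exp_neg_inv_poly_def\<close>)
qed

lemma differentiable_upto_exp_neg_inv_poly: "differentiable_upto k (exp_neg_inv_poly p)"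
proof (rule differentiable_upto_if_deriv_closed[where F = "range exp_neg_inv_poly"])
  fix g assume "g \<in> range exp_neg_inv_poly"
  then obtain q where g: "g = exp_neg_inv_poly q"
    by blast
  have "deriv g = exp_neg_inv_poly ([:0, 0, 1:] * (q - pderiv q))"
    unfolding g by (intro ext DERIV_imp_deriv has_real_derivative_exp_neg_inv_poly)
  with g has_real_derivative_exp_neg_inv_poly[of q]
  show "(\<forall>x. g differentiable (at x)) \<and> deriv g \<in> range exp_neg_inv_poly"
    by (auto simp: real_differentiable_def)
qed simp

lemma exp_neg_inv_poly_1: "exp_neg_inv_poly 1 x = (if x > 0 then exp (- (1 / x)) else 0)"
  by (simp add: exp_neg_inv_poly_def)

definition bump :: "real \<Rightarrow> real" where
  "bump t = exp_neg_inv_poly 1 (t - 1/2) * exp_neg_inv_poly 1 (2 - t)"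

lemma differentiable_upto_bump: "differentiable_upto k bump"
proof -
  have "differentiable_upto k (\<lambda>t. exp_neg_inv_poly 1 (1 * t + - 1/2) * exp_neg_inv_poly 1 ((- 1) * t + 2))"
    by (intro differentiable_upto_mult differentiable_upto_compose_affine differentiable_upto_exp_neg_inv_poly)
  then show ?thesis
    by (simp add: bump_def[abs_def])
qed

lemma bump_nonneg: "bump t \<ge> 0"
  by (simp add: bump_def exp_neg_inv_poly_1)

lemma bump_le_1: "bump t \<le> 1"
  by (simp add: bump_def exp_neg_inv_poly_1 mult_le_one)

lemma bump_nonzero_imp_interval: "bump t \<noteq> 0 \<Longrightarrow> 1/2 < t \<and> t < 2"
  by (auto simp: bump_def exp_neg_inv_poly_1 split: if_splits)

lemma exp_neg_inv_poly_1_mono: "0 < x \<Longrightarrow> x \<le> y \<Longrightarrow> exp_neg_inv_poly 1 x \<le> exp_neg_inv_poly 1 y"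
  by (simp add: exp_neg_inv_poly_1 frac_le)

lemma bump_dyadic_pair_lower:
  assumes "1 \<le> s" "s \<le> 2"
  shows "exp (- 5) \<le> bump s + bump (s / 2)"
proof (cases "s \<le> 3/2")
  case True
  have "exp_neg_inv_poly 1 (1/2) * exp_neg_inv_poly 1 (1/2) \<le> bump s"
    unfolding bump_def using assms True
    by (intro mult_mono exp_neg_inv_poly_1_mono) (auto simp: exp_neg_inv_poly_1)
  moreover have "exp_neg_inv_poly 1 (1/2) * exp_neg_inv_poly 1 (1/2) = exp (- 4)"
    by (simp add: exp_neg_inv_poly_1 flip: exp_add)
  ultimately show ?thesis
    using bump_nonneg[of "s / 2"] by (smt (verit) exp_less_mono)
next
  case False
  have "exp_neg_inv_poly 1 (1/4) * exp_neg_inv_poly 1 1 \<le> bump (s / 2)"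
    unfolding bump_def using assms False
    by (intro mult_mono exp_neg_inv_poly_1_mono) (auto simp: exp_neg_inv_poly_1)
  moreover have "exp_neg_inv_poly 1 (1/4) * exp_neg_inv_poly 1 1 = exp (- 5)"
    by (simp add: exp_neg_inv_poly_1 flip: exp_add)
  ultimately show ?thesis
    using bump_nonneg[of s] by simp
qed

definition dyadic_sum :: "int set \<Rightarrow> (real \<Rightarrow> real) \<Rightarrow> real \<Rightarrow> real" where
  "dyadic_sum F b t = (\<Sum>n\<in>F. b (2 powr n) * bump (t / 2 powr n))"

(* The sum over all n \<in> \<int>, of which only these two terms can be nonzero. *)
definition dyadic_smoothing :: "(real \<Rightarrow> real) \<Rightarrow> real \<Rightarrow> real" where
  "dyadic_smoothing b t = dyadic_sum {\<lfloor>log 2 t\<rfloor>, \<lfloor>log 2 t\<rfloor> + 1} b t"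

lemma differentiable_upto_dyadic_sum: "finite F \<Longrightarrow> differentiable_upto k (dyadic_sum F b)"
proof -
  assume "finite F"
  then have "differentiable_upto k (\<lambda>t. \<Sum>n\<in>F. b (2 powr n) * bump ((1 / 2 powr n) * t + 0))"
    by (intro differentiable_upto_sum differentiable_upto_mult differentiable_upto_const
        differentiable_upto_compose_affine differentiable_upto_bump)
  then show ?thesis
    by (simp add: dyadic_sum_def[abs_def])
qed

lemma log2_bounds_if_bump_nonzero:
  fixes n :: int
  assumes "t > 0" "bump (t / 2 powr n) \<noteq> 0"
  shows "n - 1 < log 2 t \<and> log 2 t < n + 1"
proof -
  have "1/2 < t / 2 powr n" "t / 2 powr n < 2"
    using bump_nonzero_imp_interval[OF assms(2)] by auto
  then have "log 2 (1/2) < log 2 (t / 2 powr n)" "log 2 (t / 2 powr n) < log 2 2"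
    using assms(1) by (subst log_less_cancel_iff; simp)+
  moreover have "log 2 (t / 2 powr n) = log 2 t - n"
    using assms(1) by (simp add: log_divide)
  ultimately show ?thesis
    by (simp add: log_divide)
qed

lemma dyadic_sum_eq_on_support:
  assumes "finite F" "finite G" "\<And>n. bump (t / 2 powr n) \<noteq> 0 \<Longrightarrow> n \<in> F \<inter> G"
  shows "dyadic_sum F b t = dyadic_sum G b t"
proof -
  have "dyadic_sum H b t = dyadic_sum (F \<inter> G) b t" if "H = F \<or> H = G" for H
    unfolding dyadic_sum_def using assms that by (intro sum.mono_neutral_right) auto
  then show ?thesis
    by metis
qed

lemma dyadic_smoothing_eq_dyadic_sum:
  assumes "t > 0" "finite F" "\<And>n :: int. n - 1 < log 2 t \<Longrightarrow> log 2 t < n + 1 \<Longrightarrow> n \<in> F"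
  shows "dyadic_smoothing b t = dyadic_sum F b t"
  unfolding dyadic_smoothing_def
proof (rule dyadic_sum_eq_on_support)
  fix n :: int assume "bump (t / 2 powr n) \<noteq> 0"
  with log2_bounds_if_bump_nonzero[OF assms(1)] assms(3)
  show "n \<in> {\<lfloor>log 2 t\<rfloor>, \<lfloor>log 2 t\<rfloor> + 1} \<inter> F"
    by (smt (verit, best) Int_iff floor_less_iff insert_iff le_floor_iff of_int_less_iff)
qed (use assms in auto)

lemma smooth_on_dyadic_smoothing: "smooth_on {0<..} (dyadic_smoothing b)"
proof (rule smooth_on_cong_locally)
  fix t :: real assume "t \<in> {0<..}"
  define m where "m = \<lfloor>log 2 t\<rfloor>"
  have "dyadic_smoothing b y = dyadic_sum {m - 1 .. m + 2} b y" if y: "y \<in> {t/2 <..< 2*t}" for y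
  proof (rule dyadic_smoothing_eq_dyadic_sum)
    show "y > 0" "finite {m - 1 .. m + 2}"
      using \<open>t \<in> {0<..}\<close> y by auto
    have "log 2 (t/2) < log 2 y" "log 2 y < log 2 (2*t)"
      using \<open>t \<in> {0<..}\<close> y by (subst log_less_cancel_iff; simp)+
    moreover have "log 2 (t/2) = log 2 t - 1" "log 2 (2*t) = log 2 t + 1"
      using \<open>t \<in> {0<..}\<close> by (simp_all add: log_divide log_mult)
    moreover have "m \<le> log 2 t" "log 2 t < m + 1"
      unfolding m_def by linarith+
    ultimately show "n \<in> {m - 1 .. m + 2}" if "n - 1 < log 2 y" "log 2 y < n + 1" for n :: int
      using that by simp
  qed
  moreover have "eventually (\<lambda>y. y \<in> {t/2 <..< 2*t}) (nhds t)"
    using \<open>t \<in> {0<..}\<close> by (intro eventually_nhds_in_open) auto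
  ultimately have "eventually (\<lambda>y. dyadic_smoothing b y = dyadic_sum {m - 1 .. m + 2} b y) (nhds t)"
    by (auto elim: eventually_mono)
  moreover have "smooth_on UNIV (dyadic_sum {m - 1 .. m + 2} b)"
    by (intro smooth_on_UNIV_if_differentiable_upto differentiable_upto_dyadic_sum) simp
  ultimately show "\<exists>g. smooth_on UNIV g \<and> eventually (\<lambda>y. dyadic_smoothing b y = g y) (nhds t)"
    by blast
qed

lemma dyadic_floor_bounds:
  assumes "t > 0"
  shows "2 powr \<lfloor>log 2 t\<rfloor> \<le> t" "t < 2 * 2 powr \<lfloor>log 2 t\<rfloor>"
proof -
  have "2 powr \<lfloor>log 2 t\<rfloor> \<le> 2 powr (log 2 t)" "2 powr (log 2 t) < 2 powr (\<lfloor>log 2 t\<rfloor> + 1)"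
    by (intro powr_mono powr_less_mono; linarith)+
  with assms show "2 powr \<lfloor>log 2 t\<rfloor> \<le> t" "t < 2 * 2 powr \<lfloor>log 2 t\<rfloor>"
    by (simp_all add: powr_add)
qed

lemma dyadic_smoothing_eq_pair:
  assumes "t > 0"
  defines "p \<equiv> 2 powr \<lfloor>log 2 t\<rfloor>"
  shows "dyadic_smoothing b t = b p * bump (t / p) + b (2 * p) * bump (t / p / 2)"
  by (simp add: dyadic_smoothing_def dyadic_sum_def p_def powr_add mult.commute)

lemma equiv_on_dyadic_smoothing:
  assumes K: "K \<ge> 1" "\<And>t s. 0 < t \<Longrightarrow> t \<le> s \<Longrightarrow> s \<le> 2 * t \<Longrightarrow> b s \<le> K * b t \<and> b t \<le> K * b s"
    and pos: "\<And>t. t > 0 \<Longrightarrow> b t > 0"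
  shows "equiv_on {0<..} (dyadic_smoothing b) b"
  unfolding equiv_on_def
proof (intro exI[of _ "K * exp 5"] conjI ballI)
  show "1 \<le> K * exp 5"
    using K(1) by (metis exp_ge_zero mult_mono' mult_1 one_le_exp_iff zero_le_numeral zero_le_one)
  fix t :: real assume "t \<in> {0<..}"
  then have "t > 0" "b t > 0"
    using pos by auto
  define p where "p = 2 powr \<lfloor>log 2 t\<rfloor>"
  define s where "s = t / p"
  have "p \<le> t" "t < 2 * p" "p > 0"
    using dyadic_floor_bounds[OF \<open>t > 0\<close>] by (auto simp: p_def)
  then have s: "1 \<le> s" "s \<le> 2"
    by (auto simp: s_def field_simps)
  have c: "dyadic_smoothing b t = b p * bump s + b (2 * p) * bump (s / 2)"
    using dyadic_smoothing_eq_pair[OF \<open>t > 0\<close>] by (simp add: p_def s_def)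
  have comparable: "b p \<le> K * b t" "b t \<le> K * b p" "b (2 * p) \<le> K * b t" "b t \<le> K * b (2 * p)"
    using K(2)[of p t] K(2)[of t "2 * p"] \<open>p \<le> t\<close> \<open>t < 2 * p\<close> \<open>p > 0\<close> by auto
  have "dyadic_smoothing b t \<le> K * b t * bump s + K * b t * bump (s / 2)"
    unfolding c using comparable bump_nonneg by (intro add_mono mult_right_mono) auto
  also have "\<dots> \<le> K * b t * 1 + K * b t * 1"
    using K(1) \<open>b t > 0\<close> bump_le_1 by (intro add_mono mult_left_mono) auto
  also have "\<dots> \<le> K * exp 5 * b t"
    using K(1) \<open>b t > 0\<close> exp_ge_add_one_self[of 5] by simp
  finally show "dyadic_smoothing b t \<le> K * exp 5 * b t" .
  have "b t / (K * exp 5) = b t / K * exp (- 5)"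
    by (simp add: exp_minus divide_inverse)
  also have "\<dots> \<le> b t / K * (bump s + bump (s / 2))"
    using bump_dyadic_pair_lower[OF s] K(1) \<open>b t > 0\<close> by (intro mult_left_mono) auto
  also have "\<dots> = b t / K * bump s + b t / K * bump (s / 2)"
    by (simp add: algebra_simps)
  also have "\<dots> \<le> dyadic_smoothing b t"
    unfolding c using comparable K(1) bump_nonneg
    by (intro add_mono mult_right_mono) (auto simp: divide_le_eq mult.commute)
  finally show "b t / (K * exp 5) \<le> dyadic_smoothing b t" .
qed

theorem theorem1p2:
  fixes b :: "real \<Rightarrow> real"
  assumes "slowly_varying b"
  shows "\<exists>c :: real \<Rightarrow> real. (\<forall>t>0. c t > 0) \<and> equiv_on {0<..} c b \<and>
           slowly_varying c \<and> smooth_on {0<..} c"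
proof (intro exI conjI allI impI)
  obtain K where K: "K \<ge> 1"
    "\<And>t s. 0 < t \<Longrightarrow> t \<le> s \<Longrightarrow> s \<le> 2 * t \<Longrightarrow> b s \<le> K * b t \<and> b t \<le> K * b s"
    using slowly_varying_doubling[OF assms] by blast
  have pos: "\<And>t. t > 0 \<Longrightarrow> b t > 0"
    using assms by (simp add: slowly_varying_def)
  show equiv: "equiv_on {0<..} (dyadic_smoothing b) b"
    using equiv_on_dyadic_smoothing[OF K pos] .
  show "dyadic_smoothing b t > 0" if "t > 0" for t
    using equiv_on_pos[OF equiv] pos that by simp
  show "smooth_on {0<..} (dyadic_smoothing b)"
    by (rule smooth_on_dyadic_smoothing)
  then have "continuous_on {0<..} (dyadic_smoothing b)"
    unfolding smooth_on_def by (metis funpow_0)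
  then have "dyadic_smoothing b \<in> borel_measurable (lebesgue_on {0<..})"
    by (rule continuous_imp_measurable_on_sets_lebesgue) simp
  then show "slowly_varying (dyadic_smoothing b)"
    by (rule slowly_varying_equiv[OF assms equiv])
qed

end
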